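(* Let $R_c,H,\alpha_L,\alpha_N,B,C>0$ and $0<\delta<1$. For $\lambda>0$ define, with $P_L(r_0)=\frac{1}{1+C\exp(-B(\arctan(H/r_0)-C))}$, $P_N=1-P_L$, $A_s(r_0)=(\delta(H^2+r_0^2)^{\alpha_s/2})^{1/\alpha_N}$, $B_s(r_0)=(\frac1\delta(H^2+r_0^2)^{\alpha_s/2})^{1/\alpha_N}$ ($s\in\{L,N\}$), the area fractions $\bar{C}_{\mathcal{A}_1}=\frac{2}{R_c^2}\sum_{s}\int_0^{R_c}P_s(r_0)F_{r_1|r_0}(A_s(r_0))r_0\,dr_0$ and $\bar{C}_{\mathcal{A}_3}=\frac{2}{R_c^2}\sum_{s}\int_0^{R_c}P_s(r_0)(1-F_{r_1|r_0}(B_s(r_0)))r_0\,dr_0$, where $F_{r_1|r_0}$ depends on $\lambda$ as described in the context. Then $\bar{C}_{\mathcal{A}_1}$ increases with $\lambda$ and $\bar{C}_{\mathcal{A}_3}$ decreases with $\lambda$.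
   Context: $F_{r_1|r_0}$ is the CDF of the distance $r_1$ from $x_0=(r_0,0)$, $0\le r_0\le R_c$, to the nearest point of $\Phi\setminus\{y:\|y\|\le R_c\}$, $\Phi$ a homogeneous Poisson point process of intensity $\lambda$ on $\mathbb{R}^2$: $F_{r_1|r_0}(r)=0$ for $r\le R_c-r_0$, $=1-e^{-\lambda\zeta_2(r)}$ for $R_c-r_0<r<R_c+r_0$, where $\zeta_2(r)=\pi r^2-\theta_1R_c^2+R_c^2\sin\theta_1\cos\theta_1-\theta_2r^2+r^2\sin\theta_2\cos\theta_2$, $\theta_1=\arccos\frac{R_c^2+r_0^2-r^2}{2R_cr_0}$, $\theta_2=\arccos\frac{r_0^2+r^2-R_c^2}{2r_0r}$, and $=1-e^{-\lambda(\pi r^2-\pi R_c^2)}$ otherwise. $\bar C_{\mathcal{A}_1}$ (resp. $\bar C_{\mathcal{A}_3}$) is the expected fraction of the malfunction disc whose users are served by the nearest ground base station only (resp. the UAV only). *)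

theory Defs
  imports "HOL-Analysis.Analysis"
begin

text \<open>Area function zeta_2(r) for the lens region (context), with x0 = (r0,0).\<close>
definition zeta2 :: "real \<Rightarrow> real \<Rightarrow> real \<Rightarrow> real" where
  "zeta2 Rc r0 r =
     (let th1 = arccos ((Rc^2 + r0^2 - r^2) / (2 * Rc * r0));
          th2 = arccos ((r0^2 + r^2 - Rc^2) / (2 * r0 * r))
      in pi * r^2 - th1 * Rc^2 + Rc^2 * sin th1 * cos th1
         - th2 * r^2 + r^2 * sin th2 * cos th2)"

definition F_cond :: "real \<Rightarrow> real \<Rightarrow> real \<Rightarrow> real \<Rightarrow> real" where
  "F_cond lam Rc r0 r =
     (if r \<le> Rc - r0 then 0
      else if r < Rc + r0 then 1 - exp (- lam * zeta2 Rc r0 r)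
      else 1 - exp (- lam * (pi * r^2 - pi * Rc^2)))"

definition P_L :: "real \<Rightarrow> real \<Rightarrow> real \<Rightarrow> real \<Rightarrow> real" where
  "P_L H B C r0 = 1 / (1 + C * exp (- B * (arctan (H / r0) - C)))"

definition P_N :: "real \<Rightarrow> real \<Rightarrow> real \<Rightarrow> real \<Rightarrow> real" where
  "P_N H B C r0 = 1 - P_L H B C r0"

definition A_s :: "real \<Rightarrow> real \<Rightarrow> real \<Rightarrow> real \<Rightarrow> real \<Rightarrow> real" where
  "A_s \<delta> H alpha_s alpha_N r0 = (\<delta> * (H^2 + r0^2) powr (alpha_s / 2)) powr (1 / alpha_N)"

definition B_s :: "real \<Rightarrow> real \<Rightarrow> real \<Rightarrow> real \<Rightarrow> real \<Rightarrow> real" where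
  "B_s \<delta> H alpha_s alpha_N r0 = ((1 / \<delta>) * (H^2 + r0^2) powr (alpha_s / 2)) powr (1 / alpha_N)"

definition CA1 :: "real \<Rightarrow> real \<Rightarrow> real \<Rightarrow> real \<Rightarrow> real \<Rightarrow> real \<Rightarrow> real \<Rightarrow> real \<Rightarrow> real" where
  "CA1 Rc H alpha_L alpha_N B C \<delta> lam =
     2 / Rc^2 *
       (integral {0..Rc} (\<lambda>r0. P_L H B C r0 * F_cond lam Rc r0 (A_s \<delta> H alpha_L alpha_N r0) * r0)
      + integral {0..Rc} (\<lambda>r0. P_N H B C r0 * F_cond lam Rc r0 (A_s \<delta> H alpha_N alpha_N r0) * r0))"

definition CA3 :: "real \<Rightarrow> real \<Rightarrow> real \<Rightarrow> real \<Rightarrow> real \<Rightarrow> real \<Rightarrow> real \<Rightarrow> real \<Rightarrow> real" where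
  "CA3 Rc H alpha_L alpha_N B C \<delta> lam =
     2 / Rc^2 *
       (integral {0..Rc} (\<lambda>r0. P_L H B C r0 * (1 - F_cond lam Rc r0 (B_s \<delta> H alpha_L alpha_N r0)) * r0)
      + integral {0..Rc} (\<lambda>r0. P_N H B C r0 * (1 - F_cond lam Rc r0 (B_s \<delta> H alpha_N alpha_N r0)) * r0))"

end

theory Submission
  imports Defs
begin

text \<open>The intensity enters \<open>F_cond\<close> only through \<open>1 - exp (- \<lambda> * a)\<close>, where the area \<open>a\<close>
  is either that of an annulus, \<open>\<pi> (r\<^sup>2 - R\<^sub>c\<^sup>2)\<close>, or that of a lune, \<open>\<zeta>\<^sub>2(r)\<close>. Both areas are
  nonnegative, so \<open>F_cond\<close> is pointwise nondecreasing in \<open>\<lambda>\<close>, and the coverage fractions,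
  integrals of \<open>F_cond\<close> resp. \<open>1 - F_cond\<close> against nonnegative weights, inherit this.
  With \<open>t\<^sub>1 = \<theta>\<^sub>1\<close> and \<open>t\<^sub>2 = \<pi> - \<theta>\<^sub>2\<close> one has
  \<open>\<zeta>\<^sub>2(r) = r\<^sup>2 (t\<^sub>2 - sin t\<^sub>2 cos t\<^sub>2) - R\<^sub>c\<^sup>2 (t\<^sub>1 - sin t\<^sub>1 cos t\<^sub>1)\<close>, the difference of two
  circular segments on the common chord of half-length \<open>R\<^sub>c sin t\<^sub>1 = r sin t\<^sub>2\<close>, with
  \<open>t\<^sub>1 \<le> t\<^sub>2\<close>. It is nonnegative because the segment area per squared half-chord,
  \<open>(t - sin t cos t) / sin\<^sup>2 t\<close>, increases on \<open>(0, \<pi>)\<close>.\<close>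

lemma sin_minus_mult_cos_nonneg:
  fixes t :: real
  assumes "0 \<le> t" "t \<le> pi"
  shows "0 \<le> sin t - t * cos t"
proof -
  have "sin 0 - 0 * cos 0 \<le> sin t - t * cos t"
  proof (rule DERIV_nonneg_imp_nondecreasing[OF assms(1)])
    fix x assume x: "0 \<le> x" "x \<le> t"
    have "((\<lambda>t. sin t - t * cos t) has_real_derivative x * sin x) (at x)"
      by (rule derivative_eq_intros refl | simp)+
    moreover have "0 \<le> x * sin x"
      using x assms by (simp add: sin_ge_zero)
    ultimately show "\<exists>d. ((\<lambda>t. sin t - t * cos t) has_real_derivative d) (at x) \<and> 0 \<le> d"
      by blast
  qed
  then show ?thesis by simp
qed

lemma segment_ratio_mono:
  fixes x y :: real
  assumes "0 < x" "x \<le> y" "y < pi"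
  shows "(x - sin x * cos x) / (sin x)\<^sup>2 \<le> (y - sin y * cos y) / (sin y)\<^sup>2"
proof (rule DERIV_nonneg_imp_nondecreasing[OF assms(2)])
  fix t assume t: "x \<le> t" "t \<le> y"
  have s: "sin t > 0"
    using t assms by (intro sin_gt_zero) auto
  have num: "((\<lambda>t. t - sin t * cos t) has_real_derivative 2 * (sin t)\<^sup>2) (at t)"
    by (rule derivative_eq_intros refl | simp add: power2_eq_square)+
      (smt (verit) sin_cos_squared_add power2_eq_square)
  have den: "((\<lambda>t. (sin t)\<^sup>2) has_real_derivative 2 * sin t * cos t) (at t)"
    by (rule derivative_eq_intros refl | simp)+
  have "((\<lambda>t. (t - sin t * cos t) / (sin t)\<^sup>2) has_real_derivative
      (2 * (sin t)\<^sup>2 * (sin t)\<^sup>2 - (t - sin t * cos t) * (2 * sin t * cos t))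
        / ((sin t)\<^sup>2 * (sin t)\<^sup>2)) (at t)"
    using DERIV_divide[OF num den] s by simp
  also have "2 * (sin t)\<^sup>2 * (sin t)\<^sup>2 - (t - sin t * cos t) * (2 * sin t * cos t)
      = 2 * sin t * (sin t - t * cos t)"
    using sin_cos_squared_add[of t] by algebra
  also have "2 * sin t * (sin t - t * cos t) / ((sin t)\<^sup>2 * (sin t)\<^sup>2)
      = 2 * (sin t - t * cos t) / (sin t) ^ 3"
    using s by (simp add: power2_eq_square power3_eq_cube)
  finally show "\<exists>d. ((\<lambda>t. (t - sin t * cos t) / (sin t)\<^sup>2) has_real_derivative d) (at t) \<and> 0 \<le> d"
    using sin_minus_mult_cos_nonneg[of t] t assms s by auto
qed

lemma segment_area_mono:
  fixes a b s t :: real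
  assumes "0 < s" "s \<le> t" "t < pi" "a\<^sup>2 * (sin s)\<^sup>2 = b\<^sup>2 * (sin t)\<^sup>2"
  shows "a\<^sup>2 * (s - sin s * cos s) \<le> b\<^sup>2 * (t - sin t * cos t)"
proof -
  have "sin s > 0" "sin t > 0"
    using assms by (auto intro!: sin_gt_zero)
  define h where "h = a\<^sup>2 * (sin s)\<^sup>2"
  have "a\<^sup>2 * (s - sin s * cos s) = h * ((s - sin s * cos s) / (sin s)\<^sup>2)"
    using \<open>sin s > 0\<close> by (simp add: h_def)
  also have "\<dots> \<le> h * ((t - sin t * cos t) / (sin t)\<^sup>2)"
    using segment_ratio_mono[OF assms(1-3)] by (intro mult_left_mono) (auto simp: h_def)
  also have "\<dots> = b\<^sup>2 * (t - sin t * cos t)"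
    using \<open>sin t > 0\<close> assms(4) by (simp add: h_def)
  finally show ?thesis .
qed

lemma cosine_law_ratio_bounds:
  fixes a b c :: real
  assumes "0 < a" "0 < b" "\<bar>a - b\<bar> < c" "c < a + b"
  shows "-1 < (a\<^sup>2 + b\<^sup>2 - c\<^sup>2) / (2 * a * b)" "(a\<^sup>2 + b\<^sup>2 - c\<^sup>2) / (2 * a * b) < 1"
proof -
  have "(a - b)\<^sup>2 < c\<^sup>2"
    using abs_le_square_iff[of c "a - b"] assms by auto
  moreover have "c\<^sup>2 < (a + b)\<^sup>2"
    using assms by (intro power_strict_mono) auto
  ultimately show "-1 < (a\<^sup>2 + b\<^sup>2 - c\<^sup>2) / (2 * a * b)" "(a\<^sup>2 + b\<^sup>2 - c\<^sup>2) / (2 * a * b) < 1"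
    using assms by (simp_all add: divide_simps power2_eq_square algebra_simps)
qed

lemma zeta2_nonneg:
  fixes Rc r0 r :: real
  assumes "0 < r0" "r0 \<le> Rc" "Rc - r0 < r" "r < Rc + r0"
  shows "0 \<le> zeta2 Rc r0 r"
proof -
  define c1 where "c1 = (Rc\<^sup>2 + r0\<^sup>2 - r\<^sup>2) / (2 * Rc * r0)"
  define c2 where "c2 = (r0\<^sup>2 + r\<^sup>2 - Rc\<^sup>2) / (2 * r0 * r)"
  define t1 where "t1 = arccos c1"
  define t2 where "t2 = pi - arccos c2"
  have pos: "0 < Rc" "0 < r"
    using assms by linarith+
  have c1: "-1 < c1" "c1 < 1"
    unfolding c1_def using pos assms by (intro cosine_law_ratio_bounds; simp)+
  have c2: "-1 < c2" "c2 < 1"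
    unfolding c2_def using pos assms by (intro cosine_law_ratio_bounds; simp)+
  have "2 * Rc * r0 * r * (c1 + c2) = (Rc + r) * (r0\<^sup>2 - (Rc - r)\<^sup>2)"
    unfolding c1_def c2_def using pos assms by (simp add: field_simps) algebra
  moreover have "(Rc - r)\<^sup>2 < r0\<^sup>2"
    using abs_le_square_iff[of r0 "Rc - r"] assms by auto
  ultimately have "0 < (2 * Rc * r0 * r) * (c1 + c2)"
    using pos by simp
  then have "0 < c1 + c2"
    using pos assms(1) by (metis zero_less_mult_pos mult_pos_pos zero_less_numeral)
  have t2_eq: "t2 = arccos (- c2)"
    unfolding t2_def using c2 by (simp add: arccos_minus)
  have t1: "0 < t1" "t1 \<le> t2" "t2 < pi"
    unfolding t1_def t2_eq
    using c1 c2 \<open>0 < c1 + c2\<close> arccos_lt_bounded[of c1] arccos_lt_bounded[of "- c2"]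
    by (auto intro!: arccos_le_arccos)
  have "Rc\<^sup>2 * (1 - c1\<^sup>2) = r\<^sup>2 * (1 - c2\<^sup>2)"
    unfolding c1_def c2_def using pos assms by (simp add: field_simps) algebra
  then have "Rc\<^sup>2 * (sin t1)\<^sup>2 = r\<^sup>2 * (sin t2)\<^sup>2"
    unfolding t1_def t2_def using c1 c2 by (simp add: sin_squared_eq)
  from segment_area_mono[OF t1 this]
  have "0 \<le> r\<^sup>2 * (t2 - sin t2 * cos t2) - Rc\<^sup>2 * (t1 - sin t1 * cos t1)"
    by simp
  also have "\<dots> = zeta2 Rc r0 r"
    unfolding zeta2_def Let_def c1_def[symmetric] c2_def[symmetric] t1_def[symmetric] t2_def
    by (simp add: algebra_simps)
  finally show ?thesis .
qed

lemma F_cond_eq_one_minus_exp: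
  fixes Rc r0 r :: real
  assumes "0 \<le> r0" "r0 \<le> Rc" "Rc - r0 < r"
  obtains z where "0 \<le> z" "\<And>lam. F_cond lam Rc r0 r = 1 - exp (- lam * z)"
proof (cases "r < Rc + r0")
  case True
  have "0 \<le> zeta2 Rc r0 r"
    using assms True by (intro zeta2_nonneg) auto
  moreover have "F_cond lam Rc r0 r = 1 - exp (- lam * zeta2 Rc r0 r)" for lam
    using assms True by (simp add: F_cond_def)
  ultimately show ?thesis
    by (rule that)
next
  case False
  then have "Rc\<^sup>2 \<le> r\<^sup>2"
    using assms by (intro power_mono) auto
  then have "0 \<le> pi * r\<^sup>2 - pi * Rc\<^sup>2"
    by simp
  moreover have "F_cond lam Rc r0 r = 1 - exp (- lam * (pi * r\<^sup>2 - pi * Rc\<^sup>2))" for lam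
    using assms False by (simp add: F_cond_def)
  ultimately show ?thesis
    by (rule that)
qed

lemma F_cond_bounds:
  fixes lam Rc r0 r :: real
  assumes "0 \<le> lam" "0 \<le> r0" "r0 \<le> Rc"
  shows "0 \<le> F_cond lam Rc r0 r \<and> F_cond lam Rc r0 r \<le> 1"
proof (cases "r \<le> Rc - r0")
  case False
  obtain z where "0 \<le> z" and F: "\<And>lam. F_cond lam Rc r0 r = 1 - exp (- lam * z)"
    by (rule F_cond_eq_one_minus_exp[of r0 Rc r]) (use assms False in auto)
  have "exp (- lam * z) \<le> 1"
    using \<open>0 \<le> z\<close> assms by simp
  then show ?thesis
    unfolding F by simp
qed (simp add: F_cond_def)

lemma F_cond_mono_intensity:
  fixes lam lam' Rc r0 r :: real
  assumes "lam \<le> lam'" "0 \<le> r0" "r0 \<le> Rc"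
  shows "F_cond lam Rc r0 r \<le> F_cond lam' Rc r0 r"
proof (cases "r \<le> Rc - r0")
  case False
  obtain z where "0 \<le> z" and F: "\<And>lam. F_cond lam Rc r0 r = 1 - exp (- lam * z)"
    by (rule F_cond_eq_one_minus_exp[of r0 Rc r]) (use assms False in auto)
  have "- lam' * z \<le> - lam * z"
    using \<open>0 \<le> z\<close> assms by (simp add: mult_right_mono)
  then show ?thesis
    unfolding F by simp
qed (simp add: F_cond_def)

lemma borel_measurable_arccos [measurable]:
  assumes "f \<in> borel_measurable M"
  shows "(\<lambda>x. arccos (f x)) \<in> borel_measurable M"
proof -
  \<comment> \<open>Outside \<open>[-1, 1]\<close> the value of \<open>arccos\<close> is the junk value \<open>THE x. False\<close>.\<close>
  have "arccos = (\<lambda>y. if y \<in> {-1..1} then arccos y else arccos 2)"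
  proof
    fix y :: real
    have "cos x \<noteq> y" if "y \<notin> {-1..1}" for x
      using that cos_le_one[of x] cos_ge_minus_one[of x] by auto
    moreover have "cos x \<noteq> 2" for x :: real
      using cos_le_one[of x] by linarith
    ultimately show "arccos y = (if y \<in> {-1..1} then arccos y else arccos 2)"
      unfolding arccos_def by auto
  qed
  also have "\<dots> \<in> borel_measurable borel"
    by (rule borel_measurable_continuous_on_if) (auto intro: continuous_on_arccos')
  finally show ?thesis
    using assms by (rule measurable_compose[rotated])
qed

lemma borel_measurable_F_cond [measurable]:
  assumes [measurable]: "g \<in> borel_measurable borel"
  shows "(\<lambda>r0. F_cond lam Rc r0 (g r0)) \<in> borel_measurable borel"
  unfolding F_cond_def zeta2_def Let_def by measurable

lemma borel_measurable_A_s [measurable]: "A_s \<delta> H alpha_s alpha_N \<in> borel_measurable borel"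
  unfolding A_s_def by measurable

lemma borel_measurable_B_s [measurable]: "B_s \<delta> H alpha_s alpha_N \<in> borel_measurable borel"
  unfolding B_s_def by measurable

lemma borel_measurable_P_L [measurable]: "P_L H B C \<in> borel_measurable borel"
  unfolding P_L_def by measurable

lemma borel_measurable_P_N [measurable]: "P_N H B C \<in> borel_measurable borel"
  unfolding P_N_def by measurable

lemma P_L_bounds:
  assumes "C > 0"
  shows "0 \<le> P_L H B C r0 \<and> P_L H B C r0 \<le> 1"
proof -
  have "1 \<le> 1 + C * exp (- B * (arctan (H / r0) - C))"
    using assms by simp
  then show ?thesis
    unfolding P_L_def by simp
qed

lemma P_N_bounds:
  assumes "C > 0"
  shows "0 \<le> P_N H B C r0 \<and> P_N H B C r0 \<le> 1"
  using P_L_bounds[OF assms] unfolding P_N_def by simp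

lemma integrable_on_bounded_measurable:
  fixes f :: "real \<Rightarrow> real"
  assumes "f \<in> borel_measurable borel" "\<And>x. x \<in> {a..b} \<Longrightarrow> \<bar>f x\<bar> \<le> K"
  shows "f integrable_on {a..b}"
proof (rule measurable_bounded_by_integrable_imp_integrable_real[where g = "\<lambda>_. K"])
  show "f \<in> borel_measurable (lebesgue_on {a..b})"
    using assms(1) by (simp add: measurable_restrict_space1 measurable_completion)
qed (use assms in auto)

lemma integral_mono_bounded_measurable:
  fixes f g :: "real \<Rightarrow> real"
  assumes "f \<in> borel_measurable borel" "g \<in> borel_measurable borel"
    and "\<And>x. x \<in> {a..b} \<Longrightarrow> \<bar>f x\<bar> \<le> K \<and> \<bar>g x\<bar> \<le> K"
    and "\<And>x. x \<in> {a..b} \<Longrightarrow> f x \<le> g x"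
  shows "integral {a..b} f \<le> integral {a..b} g"
  using assms by (intro integral_le integrable_on_bounded_measurable) auto

lemma coverage_integral_mono_intensity:
  fixes p g :: "real \<Rightarrow> real" and lam lam' Rc :: real
  assumes [measurable]: "p \<in> borel_measurable borel" "g \<in> borel_measurable borel"
    and p: "\<And>x. 0 \<le> p x \<and> p x \<le> 1"
    and lam: "0 \<le> lam" "lam \<le> lam'"
  shows "integral {0..Rc} (\<lambda>r0. p r0 * F_cond lam Rc r0 (g r0) * r0)
       \<le> integral {0..Rc} (\<lambda>r0. p r0 * F_cond lam' Rc r0 (g r0) * r0)"
    and "integral {0..Rc} (\<lambda>r0. p r0 * (1 - F_cond lam' Rc r0 (g r0)) * r0)
       \<le> integral {0..Rc} (\<lambda>r0. p r0 * (1 - F_cond lam Rc r0 (g r0)) * r0)"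
proof -
  have bound: "\<bar>u * v * r0\<bar> \<le> Rc" if "0 \<le> u" "u \<le> 1" "0 \<le> v" "v \<le> 1" "r0 \<in> {0..Rc}"
    for u v r0 :: real
  proof -
    have "u * v * r0 \<le> 1 * Rc"
      using that by (intro mult_mono mult_le_one) auto
    then show ?thesis
      using that by simp
  qed
  have F: "0 \<le> F_cond mu Rc r0 (g r0) \<and> F_cond mu Rc r0 (g r0) \<le> 1"
    if "mu \<in> {lam, lam'}" "r0 \<in> {0..Rc}" for mu r0
    using F_cond_bounds[of mu r0 Rc] that lam by auto
  have integrand_bounds:
    "\<bar>p r0 * F_cond mu Rc r0 (g r0) * r0\<bar> \<le> Rc \<and> \<bar>p r0 * (1 - F_cond mu Rc r0 (g r0)) * r0\<bar> \<le> Rc"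
    if "mu \<in> {lam, lam'}" "r0 \<in> {0..Rc}" for mu r0
    using F[OF that] p[of r0] that bound[of "p r0" "F_cond mu Rc r0 (g r0)" r0]
      bound[of "p r0" "1 - F_cond mu Rc r0 (g r0)" r0]
    by simp
  have mono: "F_cond lam Rc r0 (g r0) \<le> F_cond lam' Rc r0 (g r0)" if "r0 \<in> {0..Rc}" for r0
    using F_cond_mono_intensity[of lam lam' r0 Rc] that lam by auto
  have meas_F: "(\<lambda>r0. p r0 * F_cond mu Rc r0 (g r0) * r0) \<in> borel_measurable borel" for mu
    by measurable
  have meas_1_minus_F: "(\<lambda>r0. p r0 * (1 - F_cond mu Rc r0 (g r0)) * r0) \<in> borel_measurable borel" for mu
    by measurable
  show "integral {0..Rc} (\<lambda>r0. p r0 * F_cond lam Rc r0 (g r0) * r0)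
       \<le> integral {0..Rc} (\<lambda>r0. p r0 * F_cond lam' Rc r0 (g r0) * r0)"
  proof (rule integral_mono_bounded_measurable[where K = Rc, OF meas_F meas_F])
    fix x assume "x \<in> {0..Rc}"
    then show "p x * F_cond lam Rc x (g x) * x \<le> p x * F_cond lam' Rc x (g x) * x"
      using p mono by (intro mult_right_mono mult_left_mono) auto
  qed (simp add: integrand_bounds)
  show "integral {0..Rc} (\<lambda>r0. p r0 * (1 - F_cond lam' Rc r0 (g r0)) * r0)
       \<le> integral {0..Rc} (\<lambda>r0. p r0 * (1 - F_cond lam Rc r0 (g r0)) * r0)"
  proof (rule integral_mono_bounded_measurable[where K = Rc, OF meas_1_minus_F meas_1_minus_F])
    fix x assume "x \<in> {0..Rc}"
    then show "p x * (1 - F_cond lam' Rc x (g x)) * x \<le> p x * (1 - F_cond lam Rc x (g x)) * x"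
      using p mono by (intro mult_right_mono mult_left_mono) auto
  qed (simp add: integrand_bounds)
qed

theorem corollary2:
  fixes Rc H alpha_L alpha_N B C \<delta> :: real
  assumes "Rc > 0" "H > 0" "alpha_L > 0" "alpha_N > 0" "B > 0" "C > 0"
    and "0 < \<delta>" "\<delta> < 1"
  shows "mono_on {0<..} (CA1 Rc H alpha_L alpha_N B C \<delta>)
       \<and> antimono_on {0<..} (CA3 Rc H alpha_L alpha_N B C \<delta>)"
proof -
  have "CA1 Rc H alpha_L alpha_N B C \<delta> lam \<le> CA1 Rc H alpha_L alpha_N B C \<delta> lam'"
    and "CA3 Rc H alpha_L alpha_N B C \<delta> lam' \<le> CA3 Rc H alpha_L alpha_N B C \<delta> lam"
    if "0 \<le> lam" "lam \<le> lam'" for lam lam'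
  proof -
    note P_L = borel_measurable_P_L P_L_bounds[OF \<open>C > 0\<close>]
      and P_N = borel_measurable_P_N P_N_bounds[OF \<open>C > 0\<close>]
    show "CA1 Rc H alpha_L alpha_N B C \<delta> lam \<le> CA1 Rc H alpha_L alpha_N B C \<delta> lam'"
      unfolding CA1_def
      using coverage_integral_mono_intensity(1)[OF P_L(1) borel_measurable_A_s P_L(2) that]
        coverage_integral_mono_intensity(1)[OF P_N(1) borel_measurable_A_s P_N(2) that]
      by (intro mult_left_mono add_mono) auto
    show "CA3 Rc H alpha_L alpha_N B C \<delta> lam' \<le> CA3 Rc H alpha_L alpha_N B C \<delta> lam"
      unfolding CA3_def
      using coverage_integral_mono_intensity(2)[OF P_L(1) borel_measurable_B_s P_L(2) that]
        coverage_integral_mono_intensity(2)[OF P_N(1) borel_measurable_B_s P_N(2) that]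
      by (intro mult_left_mono add_mono) auto
  qed
  then show ?thesis
    by (auto intro!: mono_onI monotone_onI)
qed

end
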